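(* Let $G_0$ be the group defined in the context. The commutator subgroup $G_0'$ consists exactly of those elements $g\in G_0$ that satisfy both of the following: - $g$, as a homeomorphism of $\mathbb{R}$, has compact support; - $g$ is represented by a word over the generating set $\{x_{\mathtt s}:\mathtt s\in 2^{<\mathbb{N}}\}\cup\{y_{\mathtt s}:\mathtt s \text{ non-constant}\}$ in which the total exponent of the $y$-generators is zero.
   Context: Let $2^{\mathbb{N}}$ be the set of infinite binary sequences and $2^{<\mathbb{N}}$ the set of finite ones. Define maps of $2^{\mathbb{N}}$ as follows. - $x$ is given by $x(\mathtt{00}\xi)=\mathtt{0}\xi$, $x(\mathtt{01}\xi)=\mathtt{10}\xi$, $x(\mathtt{1}\xi)=\mathtt{11}\xi$. - $y$ and $y^{-1}$ are defined recursively by $y(\mathtt{00}\xi)=\mathtt{0}y(\xi)$, $y(\mathtt{01}\xi)=\mathtt{10}y^{-1}(\xi)$, $y(\mathtt{1}\xi)=\mathtt{11}y(\xi)$, and $y^{-1}(\mathtt{0}\xi)=\mathtt{00}y^{-1}(\xi)$, $y^{-1}(\mathtt{10}\xi)=\mathtt{01}y(\xi)$, $y^{-1}(\mathtt{11}\xi)=\mathtt{1}y^{-1}(\xi)$. - For a finite sequence $\mathtt s$, $x_{\mathtt s}(\mathtt s\xi)=\mathtt s x(\xi)$, and $x_{\mathtt s}$ is the identity on sequences not beginning with $\mathtt s$. The map $y_{\mathtt s}$ is defined similarly. A finite sequence is constant if it is of the form $\mathtt0^n$ or $\mathtt1^n$. Define $\varphi(\mathtt0\xi)=1/(1+1/\varphi(\xi))$,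 $\varphi(\mathtt1\xi)=1+\varphi(\xi)$, $\Phi(\mathtt0\xi)=-\varphi(\tilde\xi)$ and $\Phi(\mathtt1\xi)=\varphi(\xi)$, where $\tilde\xi$ swaps $\mathtt0,\mathtt1$. Via $\Phi:2^{\mathbb N}\to\mathbb{R}$ these maps induce homeomorphisms of $\mathbb{R}$. Under this identification, $x,x_{\mathtt1},y_{\mathtt{10}}$ are the maps $a(t)=t+1$, $b$ and $c$, where - $b(t)=t$ for $t\le0$, $t/(1-t)$ on $[0,1/2]$, $(3t-1)/t$ on $[1/2,1]$, and $t+1$ for $t\ge1$; - $c(t)=2t/(t+1)$ on $[0,1]$ and $t$ otherwise. $G_0$ is the group generated by all $x_{\mathtt s}$ and all $y_{\mathtt s}$ with $\mathtt s$ non-constant; it equals the group generated by $a,b,c$. *)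

theory Defs
  imports "HOL-Analysis.Analysis" "HOL-Algebra.Bij" "HOL-Algebra.Generated_Groups"
begin

text \<open>Infinite binary sequences (2^N) are modelled as nat => bool (False = 0, True = 1);
finite binary sequences as bool list.\<close>

type_synonym seq = "nat \<Rightarrow> bool"

definition prepend :: "bool list \<Rightarrow> seq \<Rightarrow> seq" where
  "prepend s \<xi> = (\<lambda>n. if n < length s then s ! n else \<xi> (n - length s))"

definition sdrop :: "nat \<Rightarrow> seq \<Rightarrow> seq" where
  "sdrop k \<xi> = (\<lambda>n. \<xi> (n + k))"

definition has_prefix :: "bool list \<Rightarrow> seq \<Rightarrow> bool" where
  "has_prefix s \<xi> \<longleftrightarrow> (\<forall>i < length s. \<xi> i = s ! i)"

definition xmap :: "seq \<Rightarrow> seq" where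
  "xmap \<xi> = (if \<not> \<xi> 0 \<and> \<not> \<xi> 1 then prepend [False] (sdrop 2 \<xi>)
             else if \<not> \<xi> 0 then prepend [True, False] (sdrop 2 \<xi>)
             else prepend [True, True] (sdrop 1 \<xi>))"

text \<open>The recursive definitions of y (mode True) and y^-1 (mode False), as a transducer
on finite words: complete input blocks are consumed, an incomplete tail produces nothing.\<close>
fun ytr :: "bool \<Rightarrow> bool list \<Rightarrow> bool list" where
  "ytr True (False # False # r) = False # ytr True r"
| "ytr True (False # True # r) = True # False # ytr False r"
| "ytr True (True # r) = True # True # ytr True r"
| "ytr False (False # r) = False # False # ytr False r"
| "ytr False (True # False # r) = False # True # ytr True r"
| "ytr False (True # True # r) = True # ytr False r"
| "ytr _ _ = []"

text \<open>The n-th output symbol is determined by the input prefix of length 2n+3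
(which always yields at least n+1 output symbols).\<close>
definition ymode :: "bool \<Rightarrow> seq \<Rightarrow> seq" where
  "ymode m \<xi> = (\<lambda>n. ytr m (map \<xi> [0..<2*n+3]) ! n)"

definition ymap :: "seq \<Rightarrow> seq" where "ymap = ymode True"
definition yinvmap :: "seq \<Rightarrow> seq" where "yinvmap = ymode False"

definition loc :: "bool list \<Rightarrow> (seq \<Rightarrow> seq) \<Rightarrow> seq \<Rightarrow> seq" where
  "loc s f \<xi> = (if has_prefix s \<xi> then prepend s (f (sdrop (length s) \<xi>)) else \<xi>)"

definition x_s :: "bool list \<Rightarrow> seq \<Rightarrow> seq" where "x_s s = loc s xmap"
definition y_s :: "bool list \<Rightarrow> seq \<Rightarrow> seq" where "y_s s = loc s ymap"

definition constant_word :: "bool list \<Rightarrow> bool" where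
  "constant_word s \<longleftrightarrow> (\<exists>n. s = replicate n False \<or> s = replicate n True)"

abbreviation Sym :: "(seq \<Rightarrow> seq) monoid" where "Sym \<equiv> BijGroup UNIV"

definition gens :: "(seq \<Rightarrow> seq) set" where
  "gens = {x_s s | s. True} \<union> {y_s s | s. \<not> constant_word s}"

definition G0 :: "(seq \<Rightarrow> seq) set" where
  "G0 = generate Sym gens"

definition G0' :: "(seq \<Rightarrow> seq) set" where
  "G0' = derived Sym G0"

text \<open>Words over the generators: letters are (generator, exponent sign), sign True = +1.\<close>
datatype letter = LX "bool list" | LY "bool list"

fun letter_map :: "letter \<Rightarrow> seq \<Rightarrow> seq" where
  "letter_map (LX s) = x_s s"
| "letter_map (LY s) = y_s s"

definition valid_word :: "(letter \<times> bool) list \<Rightarrow> bool" where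
  "valid_word w \<longleftrightarrow> (\<forall>(l, e) \<in> set w. case l of LX s \<Rightarrow> True | LY s \<Rightarrow> \<not> constant_word s)"

fun word_eval :: "(letter \<times> bool) list \<Rightarrow> seq \<Rightarrow> seq" where
  "word_eval [] = \<one>\<^bsub>Sym\<^esub>"
| "word_eval ((l, e) # w) =
     (if e then letter_map l else inv\<^bsub>Sym\<^esub> (letter_map l)) \<otimes>\<^bsub>Sym\<^esub> word_eval w"

fun y_exponent :: "(letter \<times> bool) list \<Rightarrow> int" where
  "y_exponent [] = 0"
| "y_exponent ((LX s, e) # w) = y_exponent w"
| "y_exponent ((LY s, e) # w) = (if e then 1 else -1) + y_exponent w"

text \<open>The identification Phi : 2^N -> [-inf, inf].  phi is the limit of the finite
stages of its recursion phi(0 xi) = 1/(1+1/phi(xi)), phi(1 xi) = 1 + phi(xi).\<close>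
fun phi_stage :: "nat \<Rightarrow> seq \<Rightarrow> real" where
  "phi_stage 0 \<xi> = 1"
| "phi_stage (Suc n) \<xi> =
     (if \<xi> 0 then 1 + phi_stage n (sdrop 1 \<xi>) else 1 / (1 + 1 / phi_stage n (sdrop 1 \<xi>)))"

definition phi :: "seq \<Rightarrow> ereal" where
  "phi \<xi> = lim (\<lambda>n. ereal (phi_stage n \<xi>))"

definition Phi :: "seq \<Rightarrow> ereal" where
  "Phi \<xi> = (if \<xi> 0 then phi (sdrop 1 \<xi>) else - phi (\<lambda>n. \<not> \<xi> (n + 1)))"

definition compact_support :: "(seq \<Rightarrow> seq) \<Rightarrow> bool" where
  "compact_support g \<longleftrightarrow>
     (\<exists>K :: real set. compact K \<and>
        (\<forall>\<xi> t. Phi \<xi> = ereal t \<longrightarrow> t \<notin> K \<longrightarrow> Phi (g \<xi>) = Phi \<xi>))"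

end

theory Submission
  imports Defs
begin

text \<open>Both conditions define subgroups containing all commutators of G0. The y-exponent is additive.
Near the ends 1 1 1 ... and 0 0 0 ... (that is, near +\<infinity> and -\<infinity>) every element of G0 changes the
length of the leading constant block by a fixed integer, and this integer is additive; trivial
germs at both ends mean compact support.

Conversely, conjugation by x_t moves a localised map from the cylinder of t 0 0 u to that of t 0 u,
from t 0 1 u to t 1 0 u and from t 1 u to t 1 1 u, and the relation x x = x_1 x x_0 splits the class
of x_s. Hence in the abelianisation every x_s is a product of powers of the classes of x and x_1,
and every y_s has the class of y_10. An element with a word of y-exponent zero therefore agrees
modulo the commutator subgroup with some x^i x_1^j, whose germs are i + j at +\<infinity> and -i at
-\<infinity>; if the element has compact support, both vanish and the element is a product of
commutators.\<close>

text \<open>Plain inv cannot be used: next to HOL-Algebra it parses as the inverse of an implicit structure.\<close>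
abbreviation finv :: "('a \<Rightarrow> 'b) \<Rightarrow> 'b \<Rightarrow> 'a" where "finv f \<equiv> inv_into UNIV f"

lemma prepend_Nil [simp]: "prepend [] \<xi> = \<xi>"
  by (simp add: prepend_def)

lemma prepend_append: "prepend (u @ v) \<xi> = prepend u (prepend v \<xi>)"
  by (rule ext) (auto simp: prepend_def nth_append)

lemma prepend_Cons_prepend [simp]: "prepend [a] (prepend w \<eta>) = prepend (a # w) \<eta>"
  using prepend_append[of "[a]" w] by simp

lemma prepend_Cons_Cons_prepend [simp]: "prepend [a, b] (prepend w \<eta>) = prepend (a # b # w) \<eta>"
  using prepend_append[of "[a, b]" w] by simp

lemma prepend_Cons_0 [simp]: "prepend (a # v) \<xi> 0 = a"
  by (simp add: prepend_def)

lemma prepend_Cons_Suc [simp]: "prepend (a # v) \<xi> (Suc n) = prepend v \<xi> n"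
  by (simp add: prepend_def)

lemma sdrop_0 [simp]: "sdrop 0 \<xi> = \<xi>"
  by (simp add: sdrop_def)

lemma sdrop_prepend [simp]: "sdrop (length u) (prepend u \<xi>) = \<xi>"
  by (rule ext) (simp add: prepend_def sdrop_def)

lemma sdrop_Suc_0_prepend_Cons [simp]: "sdrop (Suc 0) (prepend (a # w) \<eta>) = prepend w \<eta>"
  by (rule ext) (simp add: sdrop_def prepend_def)

lemma sdrop_2_prepend_Cons_Cons [simp]: "sdrop 2 (prepend (a # b # w) \<eta>) = prepend w \<eta>"
  by (rule ext) (simp add: sdrop_def prepend_def)

lemma prepend_map_sdrop: "prepend (map \<xi> [0..<k]) (sdrop k \<xi>) = \<xi>"
  by (rule ext) (simp add: prepend_def sdrop_def)

lemma prepend_eq_prepend_iff: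
  assumes "length u = length v"
  shows "prepend u \<xi> = prepend v \<eta> \<longleftrightarrow> u = v \<and> \<xi> = \<eta>"
proof
  assume e: "prepend u \<xi> = prepend v \<eta>"
  have "u = v"
  proof (rule nth_equalityI)
    fix i assume "i < length u"
    then show "u ! i = v ! i" using fun_cong[OF e, of i] assms by (simp add: prepend_def)
  qed (use assms in simp)
  with e show "u = v \<and> \<xi> = \<eta>" by (metis sdrop_prepend)
qed simp

lemma has_prefix_iff_prepend: "has_prefix s \<xi> \<longleftrightarrow> (\<exists>\<eta>. \<xi> = prepend s \<eta>)"
proof
  assume "has_prefix s \<xi>"
  then have "\<xi> = prepend s (sdrop (length s) \<xi>)"
    by (auto simp: prepend_def sdrop_def has_prefix_def)
  then show "\<exists>\<eta>. \<xi> = prepend s \<eta>" by blast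
qed (auto simp: has_prefix_def prepend_def)

lemma has_prefix_prepend [simp]: "has_prefix s (prepend s \<eta>)"
  using has_prefix_iff_prepend by blast

lemma seq_cases_2:
  obtains (FF) \<eta> where "\<xi> = prepend [False, False] \<eta>"
  | (FT) \<eta> where "\<xi> = prepend [False, True] \<eta>"
  | (TF) \<eta> where "\<xi> = prepend [True, False] \<eta>"
  | (TT) \<eta> where "\<xi> = prepend [True, True] \<eta>"
proof -
  have "\<xi> = prepend [\<xi> 0, \<xi> 1] (sdrop 2 \<xi>)"
    using prepend_map_sdrop[of \<xi> 2] by (simp add: numeral_2_eq_2)
  then show thesis using that by (cases "\<xi> 0"; cases "\<xi> 1") metis+
qed

lemma seq_cases_3: obtains a b c \<zeta> where "\<xi> = prepend [a, b, c] \<zeta>"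
proof -
  have "map \<xi> [0..<3] = [\<xi> 0, \<xi> 1, \<xi> 2]" by (simp add: upt_rec numeral_2_eq_2)
  then show thesis using that prepend_map_sdrop[of \<xi> 3] by metis
qed

lemma prepend_replicate_const:
  assumes "\<forall>j<M. \<xi> j = \<xi> 0"
  shows "\<xi> = prepend (replicate M (\<xi> 0)) (sdrop M \<xi>)"
proof
  fix n
  show "\<xi> n = prepend (replicate M (\<xi> 0)) (sdrop M \<xi>) n"
    using assms[rule_format, of n] by (cases "n < M") (simp_all add: prepend_def sdrop_def)
qed

lemma loc_prepend [simp]: "loc s f (prepend s \<eta>) = prepend s (f \<eta>)"
  by (simp add: loc_def)

lemma loc_prepend_append: "loc s f (prepend (s @ w) \<eta>) = prepend s (f (prepend w \<eta>))"
  by (simp add: prepend_append)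

lemma loc_not_prefix: "\<not> has_prefix s \<xi> \<Longrightarrow> loc s f \<xi> = \<xi>"
  by (simp add: loc_def)

lemma loc_Nil [simp]: "loc [] f = f"
  by (simp add: loc_def fun_eq_iff has_prefix_def)

lemma loc_id: "loc s id = id"
  by (rule ext) (auto simp: loc_def has_prefix_iff_prepend)

lemma loc_comp: "loc s f \<circ> loc s g = loc s (f \<circ> g)"
proof
  fix \<xi> show "(loc s f \<circ> loc s g) \<xi> = loc s (f \<circ> g) \<xi>"
    by (cases "has_prefix s \<xi>") (auto simp: has_prefix_iff_prepend loc_not_prefix)
qed

lemma loc_append: "loc s (loc t f) = loc (s @ t) f"
proof
  fix \<xi>
  consider \<zeta> where "\<xi> = prepend (s @ t) \<zeta>"
    | \<eta> where "\<xi> = prepend s \<eta>" "\<not> has_prefix t \<eta>"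
    | "\<not> has_prefix s \<xi>"
    by (metis has_prefix_iff_prepend prepend_append)
  then show "loc s (loc t f) \<xi> = loc (s @ t) f \<xi>"
  proof cases
    case 2
    then have "\<not> has_prefix (s @ t) \<xi>"
      by (auto simp: has_prefix_iff_prepend prepend_append prepend_eq_prepend_iff)
    then show ?thesis using 2 by (simp add: loc_not_prefix)
  next
    case 3
    then have "\<not> has_prefix (s @ t) \<xi>"
      by (auto simp: has_prefix_iff_prepend prepend_append)
    then show ?thesis using 3 by (simp add: loc_not_prefix)
  qed (metis loc_prepend loc_prepend_append prepend_append)
qed

lemma bij_comp_finv: "bij f \<Longrightarrow> f \<circ> finv f = id"
  by (metis bij_is_surj surj_iff)

lemma bij_finv_comp: "bij f \<Longrightarrow> finv f \<circ> f = id"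
  by (metis bij_is_inj inj_iff)

lemma bij_loc: assumes "bij f" shows "bij (loc s f)"
  using assms
  by (intro o_bij[of "loc s (finv f)"]) (simp_all add: loc_comp bij_comp_finv bij_finv_comp loc_id)

lemma conj_loc:
  assumes "bij h" and h_prefix: "\<And>\<eta>. h (prepend p \<eta>) = prepend q \<eta>"
  shows "h \<circ> loc p f \<circ> finv h = loc q f"
proof
  fix \<xi>
  have finv_h: "finv h (prepend q \<eta>) = prepend p \<eta>" for \<eta>
    using assms by (metis bij_inv_eq_iff)
  show "(h \<circ> loc p f \<circ> finv h) \<xi> = loc q f \<xi>"
  proof (cases "has_prefix q \<xi>")
    case True
    then show ?thesis by (auto simp: has_prefix_iff_prepend finv_h h_prefix)
  next
    case False
    then have "\<not> has_prefix p (finv h \<xi>)"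
      using assms by (metis bij_inv_eq_iff has_prefix_iff_prepend)
    then show ?thesis using False \<open>bij h\<close> by (simp add: loc_not_prefix bij_is_surj surj_f_inv_f)
  qed
qed

section \<open>The maps x and y\<close>

lemma xmap_FF: "xmap (prepend (False # False # w) \<eta>) = prepend (False # w) \<eta>"
  by (simp add: xmap_def)

lemma xmap_FT: "xmap (prepend (False # True # w) \<eta>) = prepend (True # False # w) \<eta>"
  by (simp add: xmap_def)

lemma xmap_T: "xmap (prepend (True # w) \<eta>) = prepend (True # True # w) \<eta>"
  by (simp add: xmap_def)

definition xinvmap :: "seq \<Rightarrow> seq" where
  "xinvmap \<xi> = (if \<not> \<xi> 0 then prepend [False, False] (sdrop 1 \<xi>)
                else if \<not> \<xi> 1 then prepend [False, True] (sdrop 2 \<xi>)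
                else prepend [True] (sdrop 2 \<xi>))"

lemma xinvmap_F: "xinvmap (prepend (False # w) \<eta>) = prepend (False # False # w) \<eta>"
  by (simp add: xinvmap_def)

lemma xinvmap_TF: "xinvmap (prepend (True # False # w) \<eta>) = prepend (False # True # w) \<eta>"
  by (simp add: xinvmap_def)

lemma xinvmap_TT: "xinvmap (prepend (True # True # w) \<eta>) = prepend (True # w) \<eta>"
  by (simp add: xinvmap_def)

lemma xinvmap_xmap: "xinvmap (xmap \<xi>) = \<xi>"
  by (cases \<xi> rule: seq_cases_2)
     (simp_all only: xmap_FF xmap_FT xmap_T[of "[_]", simplified] xinvmap_F xinvmap_TF xinvmap_TT)

lemma xmap_xinvmap: "xmap (xinvmap \<xi>) = \<xi>"
  by (cases \<xi> rule: seq_cases_2)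
     (simp_all only: xmap_FF xmap_FT xmap_T xinvmap_F[of "[_]", simplified] xinvmap_TF xinvmap_TT)

lemma bij_xmap: "bij xmap"
  by (rule bij_betw_byWitness[of UNIV xinvmap]) (simp_all add: xinvmap_xmap xmap_xinvmap)

lemma loc_singleton_prepend:
  "loc [a] f (prepend (b # w) \<eta>) = (if a = b then prepend [a] (f (prepend w \<eta>)) else prepend (b # w) \<eta>)"
  using loc_prepend_append[of "[a]" f w \<eta>] by (auto simp: loc_not_prefix has_prefix_def)

lemma xmap_square: "xmap \<circ> xmap = loc [True] xmap \<circ> xmap \<circ> loc [False] xmap"
proof
  fix \<xi>
  obtain a b c \<zeta> where e: "\<xi> = prepend [a, b, c] \<zeta>" by (rule seq_cases_3)
  show "(xmap \<circ> xmap) \<xi> = (loc [True] xmap \<circ> xmap \<circ> loc [False] xmap) \<xi>"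
    unfolding e by (cases a; cases b; cases c) (simp_all add: xmap_FF xmap_FT xmap_T loc_singleton_prepend)
qed

lemma x_s_square: "x_s s \<circ> x_s s = x_s (s @ [True]) \<circ> x_s s \<circ> x_s (s @ [False])"
proof -
  have "x_s s \<circ> x_s s = loc s (loc [True] xmap \<circ> xmap \<circ> loc [False] xmap)"
    by (simp add: x_s_def loc_comp xmap_square)
  then show ?thesis by (simp add: x_s_def loc_comp loc_append[symmetric])
qed

lemma length_ytr: "length xs \<le> 2 * length (ytr m xs) + 1"
  by (induction m xs rule: ytr.induct) auto

lemma ytr_append: "\<exists>zs. ytr m (xs @ ys) = ytr m xs @ zs"
  by (induction m xs rule: ytr.induct) auto

lemma ymode_eq_ytr_prefix:
  assumes "2 * n + 3 \<le> k"
  shows "ytr m (map \<xi> [0..<k]) ! n = ymode m \<xi> n"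
proof -
  have "map \<xi> [0..<k] = map \<xi> [0..<2*n+3] @ map \<xi> [2*n+3..<k]"
    using upt_add_eq_append[of 0 "2*n+3" "k-(2*n+3)"] assms by simp
  moreover have "n < length (ytr m (map \<xi> [0..<2*n+3]))"
    using length_ytr[of "map \<xi> [0..<2*n+3]" m] by simp
  ultimately show ?thesis
    using ytr_append[of m "map \<xi> [0..<2*n+3]" "map \<xi> [2*n+3..<k]"]
    by (auto simp: ymode_def nth_append)
qed

lemma map_prepend_upt:
  "length p \<le> k \<Longrightarrow> map (prepend p \<eta>) [0..<k] = p @ map \<eta> [0..<k - length p]"
proof (induction p arbitrary: k)
  case (Cons a p)
  then obtain k' where k: "k = Suc k'" by (cases k) auto
  have "map (prepend (a # p) \<eta>) [0..<Suc k'] = a # map (prepend p \<eta>) [0..<k']"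
    by (simp add: map_upt_Suc del: upt_Suc)
  then show ?case using Cons k by simp
qed simp

text \<open>A transducer rule consuming the block p and emitting q is one step of the recursive
definition of y and its inverse.\<close>
lemma ymode_prepend:
  assumes rule: "\<And>r. ytr m (p @ r) = q @ ytr m' r"
    and "length p \<le> 2 * length q" "length p \<le> 3"
  shows "ymode m (prepend p \<eta>) = prepend q (ymode m' \<eta>)"
proof
  fix n
  have "ymode m (prepend p \<eta>) n = (q @ ytr m' (map \<eta> [0..<2*n+3 - length p])) ! n"
    using assms by (simp add: ymode_def map_prepend_upt)
  also have "\<dots> = prepend q (ymode m' \<eta>) n"
    using assms by (cases "n < length q") (simp_all add: nth_append prepend_def ymode_eq_ytr_prefix)
  finally show "ymode m (prepend p \<eta>) n = prepend q (ymode m' \<eta>) n" .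
qed

lemma ymode_True_FF: "ymode True (prepend (False # False # w) \<eta>) = prepend [False] (ymode True (prepend w \<eta>))"
  using ymode_prepend[of True "[False, False]" "[False]" True "prepend w \<eta>"] by simp

lemma ymode_True_FT: "ymode True (prepend (False # True # w) \<eta>) = prepend [True, False] (ymode False (prepend w \<eta>))"
  using ymode_prepend[of True "[False, True]" "[True, False]" False "prepend w \<eta>"] by simp

lemma ymode_True_T: "ymode True (prepend (True # w) \<eta>) = prepend [True, True] (ymode True (prepend w \<eta>))"
  using ymode_prepend[of True "[True]" "[True, True]" True "prepend w \<eta>"] by simp

lemma ymode_False_F: "ymode False (prepend (False # w) \<eta>) = prepend [False, False] (ymode False (prepend w \<eta>))"
  using ymode_prepend[of False "[False]" "[False, False]" False "prepend w \<eta>"] by simp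

lemma ymode_False_TF: "ymode False (prepend (True # False # w) \<eta>) = prepend [False, True] (ymode True (prepend w \<eta>))"
  using ymode_prepend[of False "[True, False]" "[False, True]" True "prepend w \<eta>"] by simp

lemma ymode_False_TT: "ymode False (prepend (True # True # w) \<eta>) = prepend [True] (ymode False (prepend w \<eta>))"
  using ymode_prepend[of False "[True, True]" "[True]" False "prepend w \<eta>"] by simp

lemma prepend_nth_cong:
  "(length q \<le> n \<Longrightarrow> \<zeta> (n - length q) = \<zeta>' (n - length q)) \<Longrightarrow> prepend q \<zeta> n = prepend q \<zeta>' n"
  by (auto simp: prepend_def)

text \<open>Both compositions are the identity, proved coordinatewise by strong induction on the
position: each recursion step emits at least one symbol before recursing.\<close>
lemma ymode_inverse:
  "ymode False (ymode True \<xi>) n = \<xi> n \<and> ymode True (ymode False \<xi>) n = \<xi> n"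
proof (induction n arbitrary: \<xi> rule: less_induct)
  case (less n)
  have IH1: "prepend [a] (ymode m (ymode (\<not> m) \<zeta>)) n = prepend [a] \<zeta> n" for a m \<zeta>
    by (rule prepend_nth_cong) (use less[of "n - Suc 0"] in \<open>cases m; simp\<close>)
  have IH2: "prepend [a, b] (ymode m (ymode (\<not> m) \<zeta>)) n = prepend [a, b] \<zeta> n" for a b m \<zeta>
    by (rule prepend_nth_cong) (use less[of "n - Suc (Suc 0)"] in \<open>cases m; simp\<close>)
  have "ymode False (ymode True \<xi>) n = \<xi> n"
  proof (cases \<xi> rule: seq_cases_2)
    case (FF \<eta>) then show ?thesis using IH2[of False False False \<eta>] ymode_True_FF[of "[]"] ymode_False_F[of "[]"] by simp
  next
    case (FT \<eta>) then show ?thesis using IH2[of False True True \<eta>] ymode_True_FT[of "[]"] ymode_False_TF[of "[]"] by simp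
  next
    case (TF \<eta>)
    then show ?thesis using IH1[of True False "prepend [False] \<eta>"] ymode_True_T[of "[False]"] ymode_False_TT[of "[]"] by simp
  next
    case (TT \<eta>)
    then show ?thesis using IH1[of True False "prepend [True] \<eta>"] ymode_True_T[of "[True]"] ymode_False_TT[of "[]"] by simp
  qed
  moreover have "ymode True (ymode False \<xi>) n = \<xi> n"
  proof (cases \<xi> rule: seq_cases_2)
    case (FF \<eta>)
    then show ?thesis using IH1[of False True "prepend [False] \<eta>"] ymode_False_F[of "[False]"] ymode_True_FF[of "[]"] by simp
  next
    case (FT \<eta>)
    then show ?thesis using IH1[of False True "prepend [True] \<eta>"] ymode_False_F[of "[True]"] ymode_True_FF[of "[]"] by simp
  next
    case (TF \<eta>) then show ?thesis using IH2[of True False False \<eta>] ymode_False_TF[of "[]"] ymode_True_FT[of "[]"] by simp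
  next
    case (TT \<eta>) then show ?thesis using IH2[of True True True \<eta>] ymode_False_TT[of "[]"] ymode_True_T[of "[]"] by simp
  qed
  ultimately show ?case ..
qed

lemma bij_ymap: "bij ymap"
  by (rule bij_betw_byWitness[of UNIV yinvmap]) (auto simp: ymap_def yinvmap_def ymode_inverse)

lemma bij_x_s [simp]: "bij (x_s s)"
  by (simp add: x_s_def bij_loc bij_xmap)

lemma bij_y_s [simp]: "bij (y_s s)"
  by (simp add: y_s_def bij_loc bij_ymap)

section \<open>The group \<open>G\<^sub>0\<close> and its abelianisation\<close>

lemma group_Sym: "group Sym"
  by (rule group_BijGroup)

lemma carrier_Sym: "carrier Sym = {f. bij f}"
  by (simp add: BijGroup_def Bij_def)

lemma mult_Sym: "bij f \<Longrightarrow> bij g \<Longrightarrow> f \<otimes>\<^bsub>Sym\<^esub> g = f \<circ> g"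
  by (simp add: BijGroup_def Bij_def compose_def fun_eq_iff)

lemma one_Sym: "\<one>\<^bsub>Sym\<^esub> = id"
  by (simp add: BijGroup_def fun_eq_iff)

lemma inv_Sym: "bij f \<Longrightarrow> inv\<^bsub>Sym\<^esub> f = finv f"
  by (simp add: inv_BijGroup Bij_def fun_eq_iff)

lemma bij_finv: "bij f \<Longrightarrow> bij (finv f)"
  by (simp add: bij_imp_bij_inv)

lemma subgroup_SymI:
  assumes "\<And>f. f \<in> K \<Longrightarrow> bij f" "id \<in> K"
    and "\<And>f g. f \<in> K \<Longrightarrow> g \<in> K \<Longrightarrow> f \<circ> g \<in> K" "\<And>f. f \<in> K \<Longrightarrow> finv f \<in> K"
  shows "subgroup K Sym"
  by (rule group.subgroupI[OF group_Sym]) (use assms in \<open>auto simp: carrier_Sym mult_Sym inv_Sym\<close>)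

lemma G0_subgroup: "subgroup G0 Sym"
  unfolding G0_def by (rule group.generate_is_subgroup[OF group_Sym]) (auto simp: gens_def carrier_Sym)

lemma bij_of_G0: "g \<in> G0 \<Longrightarrow> bij g"
  using subgroup.subset[OF G0_subgroup] carrier_Sym by auto

lemma x_s_in_G0 [simp]: "x_s s \<in> G0"
  unfolding G0_def by (rule generate.incl) (auto simp: gens_def)

lemma y_s_in_G0: "\<not> constant_word s \<Longrightarrow> y_s s \<in> G0"
  unfolding G0_def by (rule generate.incl) (auto simp: gens_def)

lemma xmap_in_G0: "xmap \<in> G0"
  using x_s_in_G0[of "[]"] by (simp add: x_s_def)

lemma id_in_G0: "id \<in> G0"
  using subgroup.one_closed[OF G0_subgroup] by (simp add: one_Sym)

lemma comp_in_G0: "f \<in> G0 \<Longrightarrow> g \<in> G0 \<Longrightarrow> f \<circ> g \<in> G0"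
  using subgroup.m_closed[OF G0_subgroup, of f g] by (simp add: mult_Sym bij_of_G0)

lemma finv_in_G0: "f \<in> G0 \<Longrightarrow> finv f \<in> G0"
  using subgroup.m_inv_closed[OF G0_subgroup, of f] by (simp add: inv_Sym bij_of_G0)

lemma derived_G0_subset_G0: "G0' \<subseteq> G0"
  unfolding G0'_def by (rule group.derived_incl[OF group_Sym subset_refl G0_subgroup])

lemma derived_G0_subset:
  assumes "subgroup K Sym" and "\<And>f g. f \<in> G0 \<Longrightarrow> g \<in> G0 \<Longrightarrow> f \<circ> g \<circ> finv f \<circ> finv g \<in> K"
  shows "G0' \<subseteq> K"
  unfolding G0'_def derived_def
proof (rule group.generate_subgroup_incl[OF group_Sym _ assms(1)])
  show "derived_set Sym G0 \<subseteq> K"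
    using assms(2) by (auto simp: bij_of_G0 mult_Sym inv_Sym bij_finv bij_comp)
qed

abbreviation G0_group :: "(seq \<Rightarrow> seq) monoid" where "G0_group \<equiv> Sym\<lparr>carrier := G0\<rparr>"

abbreviation Ab :: "(seq \<Rightarrow> seq) set monoid" where "Ab \<equiv> G0_group Mod G0'"

definition ab :: "(seq \<Rightarrow> seq) \<Rightarrow> (seq \<Rightarrow> seq) set" where
  "ab g = G0' #>\<^bsub>G0_group\<^esub> g"

declare mult_FactGroup [simp del] one_FactGroup [simp del]

lemma group_G0: "group G0_group"
  by (rule subgroup.subgroup_is_group[OF G0_subgroup group_Sym])

lemma derived_G0_normal: "G0' \<lhd> G0_group"
  unfolding G0'_def by (rule group.derived_subgroup_is_normal[OF group_Sym G0_subgroup])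

lemma comm_group_Ab: "comm_group Ab"
  unfolding G0'_def by (rule group.derived_quot_of_subgroup_is_comm_group[OF group_Sym G0_subgroup])

lemma mult_G0: "f \<in> G0 \<Longrightarrow> g \<in> G0 \<Longrightarrow> f \<otimes>\<^bsub>G0_group\<^esub> g = f \<circ> g"
  by (simp add: mult_Sym bij_of_G0)

lemma inv_G0: "f \<in> G0 \<Longrightarrow> inv\<^bsub>G0_group\<^esub> f = finv f"
  using group.m_inv_consistent[OF group_Sym G0_subgroup] by (simp add: inv_Sym bij_of_G0)

lemma group_hom_ab: "group_hom G0_group Ab ab"
  unfolding group_hom_def group_hom_axioms_def ab_def
  using normal.r_coset_hom_Mod[OF derived_G0_normal] group_G0 comm_group_Ab
  by (simp add: comm_group.axioms(2))

lemma ab_in_carrier: "f \<in> G0 \<Longrightarrow> ab f \<in> carrier Ab"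
  using group_hom.hom_closed[OF group_hom_ab] by simp

lemma ab_comp: "f \<in> G0 \<Longrightarrow> g \<in> G0 \<Longrightarrow> ab (f \<circ> g) = ab f \<otimes>\<^bsub>Ab\<^esub> ab g"
  using group_hom.hom_mult[OF group_hom_ab, of f g] by (simp add: mult_Sym bij_of_G0)

lemma ab_finv: "f \<in> G0 \<Longrightarrow> ab (finv f) = inv\<^bsub>Ab\<^esub> ab f"
  using group_hom.hom_inv[OF group_hom_ab, of f] by (simp add: inv_G0)

lemma ab_conj: assumes "h \<in> G0" "g \<in> G0" shows "ab (h \<circ> g \<circ> finv h) = ab g"
proof -
  interpret Ab: comm_group Ab by (rule comm_group_Ab)
  have "ab (h \<circ> g \<circ> finv h) = ab h \<otimes>\<^bsub>Ab\<^esub> ab g \<otimes>\<^bsub>Ab\<^esub> inv\<^bsub>Ab\<^esub> ab h"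
    using assms by (simp add: ab_comp ab_finv comp_in_G0 finv_in_G0)
  also have "\<dots> = ab g"
    using assms ab_in_carrier by (simp add: Ab.m_comm[of "ab h"] Ab.m_assoc)
  finally show ?thesis .
qed

lemma comp_finv_in_derived_if_ab_eq:
  assumes "f \<in> G0" "g \<in> G0" "ab f = ab g"
  shows "f \<circ> finv g \<in> G0'"
proof -
  have subgroup: "subgroup G0' G0_group" using normal.axioms(1)[OF derived_G0_normal] .
  have "f \<in> G0' #>\<^bsub>G0_group\<^esub> f"
    by (rule group.rcos_self[OF group_G0 _ subgroup]) (use assms in simp)
  then have "f \<in> G0' #>\<^bsub>G0_group\<^esub> g" using assms(3) by (simp add: ab_def)
  then have "f \<otimes>\<^bsub>G0_group\<^esub> inv\<^bsub>G0_group\<^esub> g \<in> G0'"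
    using subgroup.rcos_module_imp[OF subgroup group_G0] assms by simp
  then show ?thesis using assms by (simp add: inv_G0 mult_Sym bij_of_G0 bij_finv)
qed

section \<open>Classes of the generators in the abelianisation\<close>

lemma constant_word_iff: "constant_word s \<longleftrightarrow> False \<notin> set s \<or> True \<notin> set s"
proof
  assume "False \<notin> set s \<or> True \<notin> set s"
  then have "s = replicate (length s) True \<or> s = replicate (length s) False"
    by (metis (full_types) replicate_length_same)
  then show "constant_word s" unfolding constant_word_def by metis
qed (auto simp: constant_word_def)

locale word_moves =
  fixes P :: "bool list \<Rightarrow> 'q"
  assumes contract_F: "\<not> constant_word (t @ False # False # u) \<Longrightarrow> P (t @ False # u) = P (t @ False # False # u)"
    and swap: "P (t @ True # False # u) = P (t @ False # True # u)"
    and contract_T: "\<not> constant_word (t @ True # u) \<Longrightarrow> P (t @ True # True # u) = P (t @ True # u)"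
begin

lemma shorter_word:
  assumes "\<not> constant_word s" "length s \<ge> 3"
  obtains s' where "\<not> constant_word s'" "length s' < length s" "P s = P s'"
proof -
  obtain a b c r where s: "s = a # b # c # r"
    using assms(2) by (metis Suc_le_length_iff numeral_3_eq_3)
  have contract: "\<not> constant_word (t @ x # x # u) \<Longrightarrow> P (t @ x # x # u) = P (t @ x # u)" for t x u
    using contract_F[of t u] contract_T[of t u] by (cases x) (auto simp: constant_word_iff)
  consider "a = b" | "b = c" | "b = (\<not> a)" "c = a" by blast
  then show thesis
  proof cases
    case 1
    then have "P s = P (a # c # r)" using contract[of "[]" a "c # r"] assms(1) s by simp
    moreover have "\<not> constant_word (a # c # r)" using assms(1) s 1 by (simp add: constant_word_iff)
    ultimately show thesis using that s by simp
  next
    case 2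
    then have "P s = P (a # b # r)" using contract[of "[a]" b r] assms(1) s by simp
    moreover have "\<not> constant_word (a # b # r)" using assms(1) s 2 by (auto simp: constant_word_iff)
    ultimately show thesis using that s by simp
  next
    case 3
    have "P s = P (False # True # r)"
    proof (cases a)
      case True
      then have "P s = P (False # True # True # r)" using 3 s swap[of "[]" "True # r"] by simp
      also have "\<dots> = P (False # True # r)"
        using contract[of "[False]" True r] by (simp add: constant_word_iff)
      finally show ?thesis .
    next
      case False
      then have "P s = P (False # False # True # r)" using 3 s swap[of "[False]" r] by simp
      also have "\<dots> = P (False # True # r)"
        using contract[of "[]" False "True # r"] by (simp add: constant_word_iff)
      finally show ?thesis .
    qed
    then show thesis using that[of "False # True # r"] s by (simp add: constant_word_iff)
  qed
qed

lemma nonconstant_word_eq: "\<not> constant_word s \<Longrightarrow> P s = P [True, False]"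
proof (induction "length s" arbitrary: s rule: less_induct)
  case less
  show ?case
  proof (cases "length s \<ge> 3")
    case True
    then show ?thesis using less shorter_word by metis
  next
    case False
    have "length s \<ge> 2"
      using less.prems by (cases s; cases "tl s") (auto simp: constant_word_iff)
    then have "length s = 2" using False by simp
    then obtain a b where "s = [a, b]"
      by (metis One_nat_def Suc_1 length_0_conv length_Suc_conv)
    then show ?thesis using less.prems swap[of "[]" "[]"] by (cases a; cases b) (auto simp: constant_word_iff)
  qed
qed

end

lemma ab_loc_conj_x_s:
  assumes "loc p f \<in> G0" "\<And>\<eta>. x_s t (prepend p \<eta>) = prepend q \<eta>"
  shows "ab (loc q f) = ab (loc p f)"
  using conj_loc[of "x_s t" p q f] ab_conj[of "x_s t" "loc p f"] assms by simp

lemma x_s_prepend_FF: "x_s t (prepend (t @ False # False # u) \<eta>) = prepend (t @ False # u) \<eta>"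
  by (simp add: x_s_def loc_prepend_append xmap_FF prepend_append)

lemma x_s_prepend_FT: "x_s t (prepend (t @ False # True # u) \<eta>) = prepend (t @ True # False # u) \<eta>"
  by (simp add: x_s_def loc_prepend_append xmap_FT prepend_append)

lemma x_s_prepend_T: "x_s t (prepend (t @ True # u) \<eta>) = prepend (t @ True # True # u) \<eta>"
  by (simp add: x_s_def loc_prepend_append xmap_T prepend_append)

lemma word_moves_ab_loc:
  assumes "\<And>s. \<not> constant_word s \<Longrightarrow> loc s f \<in> G0"
  shows "word_moves (\<lambda>s. ab (loc s f))"
proof
  fix t u
  show "\<not> constant_word (t @ False # False # u) \<Longrightarrow> ab (loc (t @ False # u) f) = ab (loc (t @ False # False # u) f)"
    using assms by (intro ab_loc_conj_x_s[where t = t] x_s_prepend_FF)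
  show "ab (loc (t @ True # False # u) f) = ab (loc (t @ False # True # u) f)"
    using assms by (intro ab_loc_conj_x_s[where t = t] x_s_prepend_FT) (simp add: constant_word_iff)
  show "\<not> constant_word (t @ True # u) \<Longrightarrow> ab (loc (t @ True # True # u) f) = ab (loc (t @ True # u) f)"
    using assms by (intro ab_loc_conj_x_s[where t = t] x_s_prepend_T)
qed

lemma ab_y_s_nonconstant: "\<not> constant_word s \<Longrightarrow> ab (y_s s) = ab (y_s [True, False])"
  using word_moves.nonconstant_word_eq[OF word_moves_ab_loc] y_s_in_G0 by (simp add: y_s_def)

lemma ab_x_s_conj:
  assumes "\<And>\<eta>. x_s t (prepend p \<eta>) = prepend q \<eta>"
  shows "ab (x_s q) = ab (x_s p)"
  using ab_loc_conj_x_s[of p xmap t q] assms x_s_in_G0[of p] by (simp add: x_s_def)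

lemma ab_x_s_split: "ab (x_s s) = ab (x_s (s @ [True])) \<otimes>\<^bsub>Ab\<^esub> ab (x_s (s @ [False]))"
proof -
  interpret Ab: comm_group Ab by (rule comm_group_Ab)
  let ?x = "ab (x_s s)" and ?xT = "ab (x_s (s @ [True]))" and ?xF = "ab (x_s (s @ [False]))"
  have "?x \<otimes>\<^bsub>Ab\<^esub> ?x = ?xT \<otimes>\<^bsub>Ab\<^esub> ?x \<otimes>\<^bsub>Ab\<^esub> ?xF"
    using arg_cong[OF x_s_square[of s], of ab] by (simp only: ab_comp x_s_in_G0 comp_in_G0)
  also have "\<dots> = (?xT \<otimes>\<^bsub>Ab\<^esub> ?xF) \<otimes>\<^bsub>Ab\<^esub> ?x"
    using ab_in_carrier[OF x_s_in_G0[of s]] ab_in_carrier[OF x_s_in_G0[of "s @ [True]"]]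
      ab_in_carrier[OF x_s_in_G0[of "s @ [False]"]]
    by (simp add: Ab.m_assoc Ab.m_comm[of ?x ?xF])
  finally show ?thesis
    by (metis Ab.right_cancel Ab.m_closed ab_in_carrier x_s_in_G0)
qed

lemma ab_x_s_FT: "ab (x_s (t @ [False, True])) = \<one>\<^bsub>Ab\<^esub>"
proof -
  interpret Ab: comm_group Ab by (rule comm_group_Ab)
  have "ab (x_s (t @ [False])) = ab (x_s (t @ [False, False]))"
    by (rule ab_x_s_conj[of t]) (simp add: x_s_prepend_FF[of t "[]", simplified])
  then have "ab (x_s (t @ [False, False])) = ab (x_s (t @ [False, True])) \<otimes>\<^bsub>Ab\<^esub> ab (x_s (t @ [False, False]))"
    using ab_x_s_split[of "t @ [False]"] by simp
  then show ?thesis using ab_in_carrier[OF x_s_in_G0] Ab.r_cancel_one' by metis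
qed

lemma ab_x_s_nonconstant: "\<not> constant_word s \<Longrightarrow> ab (x_s s) = \<one>\<^bsub>Ab\<^esub>"
proof -
  assume "\<not> constant_word s"
  moreover have "loc s' xmap \<in> G0" for s'
    using x_s_in_G0[of s'] by (simp add: x_s_def)
  ultimately have "ab (x_s s) = ab (x_s [True, False])"
    using word_moves.nonconstant_word_eq[OF word_moves_ab_loc[of xmap]] by (simp add: x_s_def)
  also have "\<dots> = ab (x_s [False, True])"
    by (rule ab_x_s_conj[of "[]"]) (simp add: x_s_prepend_FT[of "[]" "[]", simplified])
  finally show ?thesis using ab_x_s_FT[of "[]"] by simp
qed

lemma ab_x_s_replicate: "ab (x_s (replicate (Suc n) b)) = ab (x_s [b])"
proof (induction n)
  case (Suc n)
  have "ab (x_s (replicate (Suc (Suc n)) b)) = ab (x_s (replicate (Suc n) b))"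
  proof (cases b)
    case True
    then show ?thesis by (intro ab_x_s_conj[of "[]"]) (simp add: x_s_prepend_T[of "[]", simplified])
  next
    case False
    then show ?thesis
      by (intro ab_x_s_conj[of "[]", symmetric]) (simp add: x_s_prepend_FF[of "[]", simplified])
  qed
  then show ?case using Suc by simp
qed simp

definition ab_monomial :: "int \<Rightarrow> int \<Rightarrow> int \<Rightarrow> (seq \<Rightarrow> seq) set" where
  "ab_monomial i j k =
     ab xmap [^]\<^bsub>Ab\<^esub> i \<otimes>\<^bsub>Ab\<^esub> ab (x_s [True]) [^]\<^bsub>Ab\<^esub> j \<otimes>\<^bsub>Ab\<^esub> ab (y_s [True, False]) [^]\<^bsub>Ab\<^esub> k"

lemma ab_generators_in_carrier:
  "ab xmap \<in> carrier Ab" "ab (x_s [True]) \<in> carrier Ab" "ab (y_s [True, False]) \<in> carrier Ab"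
  by (simp_all add: ab_in_carrier xmap_in_G0 y_s_in_G0 constant_word_iff)

lemma ab_monomial_mult:
  "ab_monomial i j k \<otimes>\<^bsub>Ab\<^esub> ab_monomial i' j' k' = ab_monomial (i + i') (j + j') (k + k')"
proof -
  interpret Ab: comm_group Ab by (rule comm_group_Ab)
  show ?thesis
    unfolding ab_monomial_def using ab_generators_in_carrier by (simp add: Ab.int_pow_mult Ab.m_ac)
qed

lemma ab_monomial_inv: "inv\<^bsub>Ab\<^esub> ab_monomial i j k = ab_monomial (- i) (- j) (- k)"
proof -
  interpret Ab: comm_group Ab by (rule comm_group_Ab)
  show ?thesis
    unfolding ab_monomial_def using ab_generators_in_carrier by (simp add: Ab.int_pow_neg Ab.inv_mult Ab.m_ac)
qed

lemma ab_x_s_False: "ab (x_s [False]) = ab_monomial 1 (-1) 0"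
proof -
  interpret Ab: comm_group Ab by (rule comm_group_Ab)
  note carrier = ab_generators_in_carrier ab_in_carrier[OF x_s_in_G0[of "[False]"]]
  have "ab xmap = ab (x_s [True]) \<otimes>\<^bsub>Ab\<^esub> ab (x_s [False])"
    using ab_x_s_split[of "[]"] by (simp add: x_s_def)
  then have "ab (x_s [False]) = inv\<^bsub>Ab\<^esub> ab (x_s [True]) \<otimes>\<^bsub>Ab\<^esub> ab xmap"
    using Ab.inv_solve_left[OF carrier(4,2,1)] by blast
  also have "\<dots> = ab xmap \<otimes>\<^bsub>Ab\<^esub> inv\<^bsub>Ab\<^esub> ab (x_s [True])"
    using Ab.m_comm[OF Ab.inv_closed[OF carrier(2)] carrier(1)] .
  also have "\<dots> = ab_monomial 1 (-1) 0"
    using carrier by (simp add: ab_monomial_def Ab.int_pow_neg Ab.int_pow_1)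
  finally show ?thesis .
qed

lemma ab_x_s_monomial: "\<exists>i j. ab (x_s s) = ab_monomial i j 0"
proof -
  interpret Ab: comm_group Ab by (rule comm_group_Ab)
  note carrier = ab_generators_in_carrier
  show ?thesis
  proof (cases "constant_word s")
    case False
    then show ?thesis using ab_x_s_nonconstant carrier by (intro exI[of _ 0] exI[of _ 0]) (simp add: ab_monomial_def)
  next
    case True
    then obtain m where "s = replicate m False \<or> s = replicate m True"
      unfolding constant_word_def by blast
    then obtain b where s: "s = replicate m b" by blast
    show ?thesis
    proof (cases m)
      case 0
      then show ?thesis using s carrier by (intro exI[of _ 1] exI[of _ 0]) (simp add: ab_monomial_def x_s_def)
    next
      case (Suc n)
      then have x_b: "ab (x_s s) = ab (x_s [b])" using s ab_x_s_replicate by simp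
      show ?thesis
      proof (cases b)
        case True
        then have "ab (x_s s) = ab_monomial 0 1 0" using x_b carrier by (simp add: ab_monomial_def)
        then show ?thesis by blast
      next
        case False
        then have "ab (x_s s) = ab_monomial 1 (-1) 0" using x_b ab_x_s_False by simp
        then show ?thesis by blast
      qed
    qed
  qed
qed

lemma ab_y_s_monomial: "\<not> constant_word s \<Longrightarrow> ab (y_s s) = ab_monomial 0 0 1"
proof -
  interpret Ab: comm_group Ab by (rule comm_group_Ab)
  assume "\<not> constant_word s"
  then show ?thesis using ab_y_s_nonconstant ab_generators_in_carrier by (simp add: ab_monomial_def)
qed

definition letter_eval :: "letter \<Rightarrow> bool \<Rightarrow> seq \<Rightarrow> seq" where
  "letter_eval l e = (if e then letter_map l else finv (letter_map l))"

definition word_inv :: "(letter \<times> bool) list \<Rightarrow> (letter \<times> bool) list" where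
  "word_inv w = rev (map (\<lambda>(l, e). (l, \<not> e)) w)"

lemma bij_letter_map [simp]: "bij (letter_map l)"
  by (cases l) simp_all

lemma bij_letter_eval [simp]: "bij (letter_eval l e)"
  by (simp add: letter_eval_def bij_finv)

lemma finv_letter_eval: "finv (letter_eval l e) = letter_eval l (\<not> e)"
  by (cases e) (simp_all add: letter_eval_def inv_inv_eq)

lemma word_eval_Nil: "word_eval [] = id"
  by (simp add: one_Sym)

lemma bij_word_eval: "bij (word_eval w)"
proof (induction w)
  case (Cons a w)
  obtain l e where a: "a = (l, e)" by fastforce
  have "word_eval (a # w) = letter_eval l e \<otimes>\<^bsub>Sym\<^esub> word_eval w"
    by (simp add: a letter_eval_def inv_Sym)
  also have "\<dots> = letter_eval l e \<circ> word_eval w"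
    using Cons.IH by (simp add: mult_Sym)
  finally show ?case using Cons.IH bij_comp bij_letter_eval by metis
qed (metis word_eval_Nil bij_id)

lemma word_eval_Cons: "word_eval ((l, e) # w) = letter_eval l e \<circ> word_eval w"
  using bij_word_eval[of w] by (simp add: inv_Sym mult_Sym bij_finv letter_eval_def)

declare word_eval.simps [simp del]

lemma word_eval_append: "word_eval (w @ v) = word_eval w \<circ> word_eval v"
  by (induction w) (auto simp: word_eval_Nil word_eval_Cons comp_assoc)

lemma word_eval_word_inv: "word_eval (word_inv w) = finv (word_eval w)"
proof (induction w)
  case (Cons a w)
  obtain l e where a: "a = (l, e)" by fastforce
  have "word_eval (word_inv (a # w)) = finv (word_eval w) \<circ> finv (letter_eval l e)"
    using Cons by (simp add: a word_inv_def word_eval_append word_eval_Cons word_eval_Nil finv_letter_eval)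
  also have "\<dots> = finv (word_eval (a # w))"
    using bij_word_eval[of w] by (simp add: a word_eval_Cons o_inv_distrib)
  finally show ?case .
qed (simp add: word_inv_def word_eval_Nil)

lemma y_exponent_append: "y_exponent (w @ v) = y_exponent w + y_exponent v"
  by (induction w rule: y_exponent.induct) simp_all

lemma y_exponent_word_inv: "y_exponent (word_inv w) = - y_exponent w"
  by (induction w rule: y_exponent.induct) (simp_all add: word_inv_def y_exponent_append)

lemma valid_word_append: "valid_word (w @ v) \<longleftrightarrow> valid_word w \<and> valid_word v"
  by (auto simp: valid_word_def)

lemma valid_word_word_inv: "valid_word (word_inv w) \<longleftrightarrow> valid_word w"
  by (auto simp: valid_word_def word_inv_def)

definition word_evals :: "((letter \<times> bool) list \<Rightarrow> bool) \<Rightarrow> (seq \<Rightarrow> seq) set" where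
  "word_evals P = {word_eval w | w. valid_word w \<and> P w}"

lemma word_evalsI: "valid_word w \<Longrightarrow> P w \<Longrightarrow> word_eval w \<in> word_evals P"
  unfolding word_evals_def by blast

lemma word_evalsE:
  assumes "f \<in> word_evals P"
  obtains w where "valid_word w" "P w" "f = word_eval w"
  using assms unfolding word_evals_def by blast

lemma subgroup_word_evals:
  assumes "P []" "\<And>w v. P w \<Longrightarrow> P v \<Longrightarrow> P (w @ v)" "\<And>w. P w \<Longrightarrow> P (word_inv w)"
  shows "subgroup (word_evals P) Sym"
proof (rule subgroup_SymI)
  show "bij f" if "f \<in> word_evals P" for f
    using that bij_word_eval by (auto elim: word_evalsE)
  show "id \<in> word_evals P"
    using word_evalsI[of "[]" P] assms(1) by (simp add: valid_word_def word_eval_Nil)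
  show "f \<circ> g \<in> word_evals P" if "f \<in> word_evals P" "g \<in> word_evals P" for f g
    using that assms(2)
    by (auto elim!: word_evalsE simp: word_eval_append[symmetric] intro!: word_evalsI valid_word_append[THEN iffD2])
  show "finv f \<in> word_evals P" if "f \<in> word_evals P" for f
    using that assms(3)
    by (auto elim!: word_evalsE simp: word_eval_word_inv[symmetric] intro!: word_evalsI valid_word_word_inv[THEN iffD2])
qed

lemma G0_subset_word_evals: "G0 \<subseteq> word_evals (\<lambda>_. True)"
  unfolding G0_def
proof (rule group.generate_subgroup_incl[OF group_Sym _ subgroup_word_evals])
  have "word_eval [(l, True)] = letter_map l" for l
    by (simp add: word_eval_Cons word_eval_Nil letter_eval_def)
  then have letter: "letter_map l \<in> word_evals (\<lambda>_. True)" if "valid_word [(l, True)]" for l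
    using word_evalsI[OF that] by metis
  have "x_s s \<in> word_evals (\<lambda>_. True)" for s
    using letter[of "LX s"] by (simp add: valid_word_def)
  moreover have "y_s s \<in> word_evals (\<lambda>_. True)" if "\<not> constant_word s" for s
    using letter[of "LY s"] that by (simp add: valid_word_def)
  ultimately show "gens \<subseteq> word_evals (\<lambda>_. True)"
    unfolding gens_def by blast
qed simp_all

lemma derived_G0_subset_y_exponent_zero: "G0' \<subseteq> word_evals (\<lambda>w. y_exponent w = 0)"
proof (rule derived_G0_subset)
  show "subgroup (word_evals (\<lambda>w. y_exponent w = 0)) Sym"
    by (rule subgroup_word_evals) (simp_all add: y_exponent_append y_exponent_word_inv)
  fix f g assume "f \<in> G0" "g \<in> G0"
  then obtain u v where "valid_word u" "f = word_eval u" "valid_word v" "g = word_eval v"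
    using G0_subset_word_evals by (blast elim: word_evalsE)
  moreover have "word_eval (u @ v @ word_inv u @ word_inv v) \<in> word_evals (\<lambda>w. y_exponent w = 0)"
    using calculation
    by (intro word_evalsI) (simp_all add: valid_word_append valid_word_word_inv y_exponent_append y_exponent_word_inv)
  ultimately show "f \<circ> g \<circ> finv f \<circ> finv g \<in> word_evals (\<lambda>w. y_exponent w = 0)"
    by (simp add: word_eval_append word_eval_word_inv comp_assoc)
qed

lemma letter_map_in_G0: "valid_word [(l, e)] \<Longrightarrow> letter_map l \<in> G0"
  by (cases l) (simp_all add: valid_word_def y_s_in_G0)

lemma letter_eval_in_G0: "valid_word [(l, e)] \<Longrightarrow> letter_eval l e \<in> G0"
  by (simp add: letter_eval_def letter_map_in_G0 finv_in_G0)

lemma word_eval_in_G0: "valid_word w \<Longrightarrow> word_eval w \<in> G0"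
proof (induction w)
  case (Cons a w)
  obtain l e where a: "a = (l, e)" by fastforce
  have "letter_eval l e \<in> G0" "word_eval w \<in> G0"
    using Cons letter_eval_in_G0[of l e] by (simp_all add: a valid_word_def)
  then show ?case unfolding a word_eval_Cons by (rule comp_in_G0)
qed (simp add: word_eval_Nil id_in_G0)

lemma ab_letter_map:
  assumes "valid_word [(l, e)]"
  shows "\<exists>i j. ab (letter_map l) = ab_monomial i j (y_exponent [(l, True)])"
proof (cases l)
  case (LX s)
  then show ?thesis using ab_x_s_monomial[of s] by simp
next
  case (LY s)
  then have "ab (letter_map l) = ab_monomial 0 0 (y_exponent [(l, True)])"
    using assms ab_y_s_monomial[of s] by (simp add: valid_word_def)
  then show ?thesis by blast
qed

lemma ab_letter_eval:
  assumes "valid_word [(l, e)]"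
  shows "\<exists>i j. ab (letter_eval l e) = ab_monomial i j (y_exponent [(l, e)])"
proof -
  obtain i j where ij: "ab (letter_map l) = ab_monomial i j (y_exponent [(l, True)])"
    using ab_letter_map[OF assms] by blast
  show ?thesis
  proof (cases e)
    case True
    then show ?thesis using ij by (auto simp: letter_eval_def)
  next
    case False
    have "y_exponent [(l, e)] = - y_exponent [(l, True)]"
      using False by (cases l) simp_all
    then have "ab (letter_eval l e) = ab_monomial (- i) (- j) (y_exponent [(l, e)])"
      using False ij letter_map_in_G0[OF assms] by (simp add: letter_eval_def ab_finv ab_monomial_inv)
    then show ?thesis by blast
  qed
qed

lemma ab_id: "ab id = \<one>\<^bsub>Ab\<^esub>"
  using group_hom.hom_one[OF group_hom_ab] by (simp add: one_Sym)

lemma ab_monomial_0: "ab_monomial 0 0 0 = \<one>\<^bsub>Ab\<^esub>"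
proof -
  interpret Ab: comm_group Ab by (rule comm_group_Ab)
  show ?thesis using ab_generators_in_carrier by (simp add: ab_monomial_def)
qed

lemma ab_word_eval: "valid_word w \<Longrightarrow> \<exists>i j. ab (word_eval w) = ab_monomial i j (y_exponent w)"
proof (induction w)
  case Nil
  have "ab (word_eval []) = ab_monomial 0 0 (y_exponent [])"
    by (simp only: word_eval_Nil ab_id ab_monomial_0 y_exponent.simps)
  then show ?case by blast
next
  case (Cons a w)
  obtain l e where a: "a = (l, e)" by fastforce
  have valid: "valid_word [(l, e)]" "valid_word w" using Cons.prems a by (auto simp: valid_word_def)
  obtain i j where ij: "ab (word_eval w) = ab_monomial i j (y_exponent w)"
    using Cons.IH[OF valid(2)] by blast
  obtain i' j' where ij': "ab (letter_eval l e) = ab_monomial i' j' (y_exponent [(l, e)])"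
    using ab_letter_eval[OF valid(1)] by blast
  have "ab (word_eval (a # w)) = ab (letter_eval l e) \<otimes>\<^bsub>Ab\<^esub> ab (word_eval w)"
    unfolding a word_eval_Cons using letter_eval_in_G0[OF valid(1)] word_eval_in_G0[OF valid(2)] by (rule ab_comp)
  also have "\<dots> = ab_monomial (i' + i) (j' + j) (y_exponent [(l, e)] + y_exponent w)"
    by (simp add: ij ij' ab_monomial_mult)
  also have "y_exponent [(l, e)] + y_exponent w = y_exponent (a # w)"
    using y_exponent_append[of "[(l, e)]" w] by (simp add: a)
  finally show ?case by blast
qed

section \<open>Germs at the two ends\<close>

text \<open>germ b g p: near the constant sequence b b b ..., g changes the length of the leading block
of b's by p. Through Phi this is translation by p near +\<infinity> (b = True) or by -p near -\<infinity>.\<close>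
definition germ :: "bool \<Rightarrow> (seq \<Rightarrow> seq) \<Rightarrow> int \<Rightarrow> bool" where
  "germ b g p \<longleftrightarrow> (\<exists>M. \<forall>N\<ge>M. int N + p \<ge> 0 \<and>
      (\<forall>\<zeta>. g (prepend (replicate N b) \<zeta>) = prepend (replicate (nat (int N + p)) b) \<zeta>))"

lemma germ_id: "germ b id 0"
  unfolding germ_def by auto

lemma germ_comp: assumes "germ b f p" "germ b g q" shows "germ b (f \<circ> g) (p + q)"
proof -
  obtain Mf where Mf: "\<And>N. N \<ge> Mf \<Longrightarrow> int N + p \<ge> 0 \<and>
      (\<forall>\<zeta>. f (prepend (replicate N b) \<zeta>) = prepend (replicate (nat (int N + p)) b) \<zeta>)"
    using assms(1) unfolding germ_def by blast
  obtain Mg where Mg: "\<And>N. N \<ge> Mg \<Longrightarrow> int N + q \<ge> 0 \<and>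
      (\<forall>\<zeta>. g (prepend (replicate N b) \<zeta>) = prepend (replicate (nat (int N + q)) b) \<zeta>)"
    using assms(2) unfolding germ_def by blast
  show ?thesis unfolding germ_def
  proof (intro exI[of _ "Mf + Mg + nat \<bar>q\<bar>"] allI impI conjI)
    fix N assume N: "N \<ge> Mf + Mg + nat \<bar>q\<bar>"
    define N' where "N' = nat (int N + q)"
    have N': "int N' = int N + q" "N' \<ge> Mf" using N unfolding N'_def by linarith+
    show "int N + (p + q) \<ge> 0" using Mf[OF N'(2)] N'(1) by linarith
    fix \<zeta>
    have "g (prepend (replicate N b) \<zeta>) = prepend (replicate N' b) \<zeta>"
      using Mg[of N] N unfolding N'_def by simp
    then show "(f \<circ> g) (prepend (replicate N b) \<zeta>) = prepend (replicate (nat (int N + (p + q))) b) \<zeta>"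
      using Mf[OF N'(2)] N'(1) by (simp add: algebra_simps)
  qed
qed

lemma germ_finv: assumes "bij f" "germ b f p" shows "germ b (finv f) (- p)"
proof -
  obtain M where M: "\<And>N. N \<ge> M \<Longrightarrow> int N + p \<ge> 0 \<and>
      (\<forall>\<zeta>. f (prepend (replicate N b) \<zeta>) = prepend (replicate (nat (int N + p)) b) \<zeta>)"
    using assms(2) unfolding germ_def by blast
  show ?thesis unfolding germ_def
  proof (intro exI[of _ "M + nat \<bar>p\<bar>"] allI impI conjI)
    fix N assume N: "N \<ge> M + nat \<bar>p\<bar>"
    define N' where "N' = nat (int N - p)"
    have N': "int N' = int N - p" "N' \<ge> M" using N unfolding N'_def by linarith+
    show "int N + - p \<ge> 0" using N by linarith
    fix \<zeta>
    have "f (prepend (replicate N' b) \<zeta>) = prepend (replicate N b) \<zeta>"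
      using M[OF N'(2)] N'(1) by simp
    then have "finv f (prepend (replicate N b) \<zeta>) = prepend (replicate N' b) \<zeta>"
      by (rule inv_f_eq[OF bij_is_inj[OF assms(1)]])
    then show "finv f (prepend (replicate N b) \<zeta>) = prepend (replicate (nat (int N + - p)) b) \<zeta>"
      by (simp add: N'_def)
  qed
qed

lemma prepend_replicate_eq_iff: "prepend (replicate A b) (\<lambda>_. \<not> b) = prepend (replicate B b) (\<lambda>_. \<not> b) \<longleftrightarrow> A = B"
proof
  assume e: "prepend (replicate A b) (\<lambda>_. \<not> b) = prepend (replicate B b) (\<lambda>_. \<not> b)"
  show "A = B"
  proof (rule ccontr)
    assume "A \<noteq> B"
    then show False using fun_cong[OF e, of "min A B"] by (simp add: prepend_def min_def split: if_splits)
  qed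
qed simp

lemma germ_unique: assumes "germ b f p" "germ b f q" shows "p = q"
proof -
  obtain M1 where M1: "\<And>N. N \<ge> M1 \<Longrightarrow> int N + p \<ge> 0 \<and>
      (\<forall>\<zeta>. f (prepend (replicate N b) \<zeta>) = prepend (replicate (nat (int N + p)) b) \<zeta>)"
    using assms(1) unfolding germ_def by blast
  obtain M2 where M2: "\<And>N. N \<ge> M2 \<Longrightarrow> int N + q \<ge> 0 \<and>
      (\<forall>\<zeta>. f (prepend (replicate N b) \<zeta>) = prepend (replicate (nat (int N + q)) b) \<zeta>)"
    using assms(2) unfolding germ_def by blast
  have "prepend (replicate (nat (int (M1 + M2) + p)) b) (\<lambda>_. \<not> b)
      = prepend (replicate (nat (int (M1 + M2) + q)) b) (\<lambda>_. \<not> b)"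
    using M1[of "M1 + M2"] M2[of "M1 + M2"] by simp
  then have "nat (int (M1 + M2) + p) = nat (int (M1 + M2) + q)"
    by (simp only: prepend_replicate_eq_iff)
  then show ?thesis using M1[of "M1 + M2"] M2[of "M1 + M2"] by auto
qed

lemma germ_loc_not_replicate:
  assumes "s \<noteq> replicate (length s) b" shows "germ b (loc s f) 0"
  unfolding germ_def
proof (intro exI[of _ "length s"] allI impI conjI)
  fix N \<zeta> assume "length s \<le> N"
  then have "has_prefix s (prepend (replicate N b) \<zeta>) \<Longrightarrow> s = replicate (length s) b"
    by (intro nth_equalityI) (auto simp: has_prefix_def prepend_def)
  then have "\<not> has_prefix s (prepend (replicate N b) \<zeta>)" using assms by blast
  then show "loc s f (prepend (replicate N b) \<zeta>) = prepend (replicate (nat (int N + 0)) b) \<zeta>"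
    by (simp add: loc_not_prefix)
qed simp

lemma germ_loc_replicate:
  assumes "germ b f p" shows "germ b (loc (replicate n b) f) p"
proof -
  obtain M where M: "\<And>N. N \<ge> M \<Longrightarrow> int N + p \<ge> 0 \<and>
      (\<forall>\<zeta>. f (prepend (replicate N b) \<zeta>) = prepend (replicate (nat (int N + p)) b) \<zeta>)"
    using assms unfolding germ_def by blast
  show ?thesis unfolding germ_def
  proof (intro exI[of _ "n + M"] allI impI conjI)
    fix N assume N: "N \<ge> n + M"
    then have M': "N - n \<ge> M" by simp
    show "int N + p \<ge> 0" using M[OF M'] N by linarith
    fix \<zeta>
    have "replicate N b = replicate n b @ replicate (N - n) b"
      using N by (simp flip: replicate_add)
    then have loc: "loc (replicate n b) f (prepend (replicate N b) \<zeta>)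
        = prepend (replicate n b @ replicate (nat (int (N - n) + p)) b) \<zeta>"
      using M[OF M'] by (simp add: loc_prepend_append prepend_append)
    have length: "n + nat (int (N - n) + p) = nat (int N + p)"
      using M[OF M'] N by linarith
    show "loc (replicate n b) f (prepend (replicate N b) \<zeta>) = prepend (replicate (nat (int N + p)) b) \<zeta>"
      by (simp only: loc replicate_add[symmetric] length)
  qed
qed

lemma germ_xmap_True: "germ True xmap 1"
  unfolding germ_def
proof (intro exI[of _ 1] allI impI conjI)
  fix N :: nat and \<zeta> assume "1 \<le> N"
  then obtain N' where N: "N = Suc N'" by (cases N) auto
  then have "nat (int N + 1) = Suc (Suc N')" by simp
  then show "xmap (prepend (replicate N True) \<zeta>) = prepend (replicate (nat (int N + 1)) True) \<zeta>"
    using xmap_T[of "replicate N' True" \<zeta>] N by simp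
qed simp

lemma germ_xmap_False: "germ False xmap (-1)"
  unfolding germ_def
proof (intro exI[of _ 2] allI impI conjI)
  fix N :: nat and \<zeta> assume "2 \<le> N"
  then obtain N' where N: "N = Suc (Suc N')" by (metis add_2_eq_Suc le_Suc_ex)
  then have "nat (int N + -1) = Suc N'" by simp
  then show "xmap (prepend (replicate N False) \<zeta>) = prepend (replicate (nat (int N + -1)) False) \<zeta>"
    using xmap_FF[of "replicate N' False" \<zeta>] N by simp
qed simp

lemma germ_x_s_True: "germ True (x_s [True]) 1"
  using germ_loc_replicate[OF germ_xmap_True, of 1] by (simp add: x_s_def)

lemma germ_x_s_False: "germ False (x_s [True]) 0"
  unfolding x_s_def by (rule germ_loc_not_replicate) simp

lemma germ_x_s: "\<exists>p. germ b (x_s s) p"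
proof (cases "s = replicate (length s) b")
  case True
  then show ?thesis using germ_loc_replicate germ_xmap_True germ_xmap_False unfolding x_s_def
    by (cases b) metis+
qed (auto simp: x_s_def intro: germ_loc_not_replicate)

lemma germ_y_s: assumes "\<not> constant_word s" shows "germ b (y_s s) 0"
proof -
  have "constant_word (replicate n b)" for n by (cases b) (auto simp: constant_word_def)
  then have "s \<noteq> replicate (length s) b" using assms by metis
  then show ?thesis unfolding y_s_def by (rule germ_loc_not_replicate)
qed

lemma subgroup_germ: "subgroup {g. bij g \<and> (\<exists>p. germ b g p)} Sym"
  by (rule subgroup_SymI) (auto intro: germ_id germ_comp germ_finv bij_comp bij_finv)

lemma subgroup_germ_zero: "subgroup {g. bij g \<and> germ b g 0} Sym"
  by (rule subgroup_SymI) (auto dest: germ_comp germ_finv intro: germ_id bij_comp bij_finv)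

lemma G0_has_germ: "g \<in> G0 \<Longrightarrow> \<exists>p. germ b g p"
proof -
  have "G0 \<subseteq> {g. bij g \<and> (\<exists>p. germ b g p)}"
    unfolding G0_def
  proof (rule group.generate_subgroup_incl[OF group_Sym _ subgroup_germ])
    show "gens \<subseteq> {g. bij g \<and> (\<exists>p. germ b g p)}"
      unfolding gens_def using germ_x_s germ_y_s bij_x_s bij_y_s by blast
  qed
  then show "g \<in> G0 \<Longrightarrow> ?thesis" by blast
qed

lemma derived_G0_germ_zero: "g \<in> G0' \<Longrightarrow> germ b g 0"
proof -
  have "G0' \<subseteq> {g. bij g \<and> germ b g 0}"
  proof (rule derived_G0_subset[OF subgroup_germ_zero])
    fix f g assume fg: "f \<in> G0" "g \<in> G0"
    then obtain p q where "germ b f p" "germ b g q" using G0_has_germ by blast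
    then have "germ b (f \<circ> g \<circ> finv f \<circ> finv g) (p + q + - p + - q)"
      using fg by (intro germ_comp germ_finv) (simp_all add: bij_of_G0)
    then show "f \<circ> g \<circ> finv f \<circ> finv g \<in> {g. bij g \<and> germ b g 0}"
      using fg by (simp add: bij_of_G0 bij_comp bij_finv)
  qed
  then show "g \<in> G0' \<Longrightarrow> ?thesis" by blast
qed

section \<open>Compact support and germs\<close>

lemma phi_stage_pos: "phi_stage n \<xi> > 0"
  by (induction n arbitrary: \<xi>) (simp_all add: add_pos_pos)

lemma phi_stage_le: "\<not> \<xi> i \<Longrightarrow> i < n \<Longrightarrow> phi_stage n \<xi> \<le> real i + 1"
proof (induction i arbitrary: \<xi> n)
  case 0
  then obtain n' where "n = Suc n'" by (cases n) auto
  then show ?case using 0 phi_stage_pos[of n' "sdrop 1 \<xi>"] by (simp add: field_simps)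
next
  case (Suc i)
  then obtain n' where n: "n = Suc n'" by (cases n) auto
  show ?case
  proof (cases "\<xi> 0")
    case False
    then show ?thesis using n phi_stage_pos[of n' "sdrop 1 \<xi>"] by (simp add: field_simps)
  next
    case True
    have "phi_stage n' (sdrop 1 \<xi>) \<le> real i + 1"
      using Suc by (intro Suc.IH) (simp_all add: n sdrop_def)
    then show ?thesis using True n by simp
  qed
qed

text \<open>The value of lim on a divergent sequence.\<close>
definition lim_junk :: ereal where "lim_junk = (THE L. False)"

lemma lim_junk_or_LIMSEQ: "lim X = lim_junk \<or> X \<longlonglongrightarrow> lim X"
proof (cases "\<exists>L. X \<longlonglongrightarrow> L")
  case False
  then have "(\<lambda>L. X \<longlonglongrightarrow> L) = (\<lambda>L. False)" by auto
  then show ?thesis by (simp add: lim_def lim_junk_def)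
qed (use limI in blast)

lemma phi_le:
  assumes "\<not> \<xi> i"
  shows "phi \<xi> = lim_junk \<or> (0 \<le> phi \<xi> \<and> phi \<xi> \<le> ereal (real i + 1))"
proof -
  consider "phi \<xi> = lim_junk" | "(\<lambda>n. ereal (phi_stage n \<xi>)) \<longlonglongrightarrow> phi \<xi>"
    using lim_junk_or_LIMSEQ unfolding phi_def by blast
  then show ?thesis
  proof cases
    case 2
    have "0 \<le> phi \<xi>"
      by (rule LIMSEQ_le_const[OF 2]) (auto intro!: less_imp_le phi_stage_pos)
    moreover have "phi \<xi> \<le> ereal (real i + 1)"
      by (rule LIMSEQ_le_const2[OF 2]) (use assms phi_stage_le in \<open>auto intro!: exI[of _ "Suc i"]\<close>)
    ultimately show ?thesis by simp
  qed simp
qed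

lemma Phi_le:
  assumes "j < M" "\<xi> j \<noteq> \<xi> 0" "Phi \<xi> = ereal t"
  shows "ereal \<bar>t\<bar> = \<bar>lim_junk\<bar> \<or> \<bar>t\<bar> \<le> real M"
proof -
  have j: "Suc (j - 1) = j" using assms(2) by (cases j) auto
  obtain \<eta> s where \<eta>: "\<not> \<eta> (j - 1)" and s: "s \<in> {-1, 1}" and "Phi \<xi> = s * phi \<eta>"
  proof (cases "\<xi> 0")
    case True
    then show thesis using assms j by (intro that[of "sdrop 1 \<xi>" 1]) (auto simp: Phi_def sdrop_def)
  next
    case False
    then show thesis using assms j by (intro that[of "\<lambda>n. \<not> \<xi> (n + 1)" "-1"]) (auto simp: Phi_def)
  qed
  then have "phi \<eta> = ereal t \<or> phi \<eta> = - ereal t"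
    using assms(3) s by (auto simp: ereal_uminus_eq_reorder)
  then have "ereal (\<bar>t\<bar>) = \<bar>phi \<eta>\<bar>" by auto
  moreover have "phi \<eta> = lim_junk \<or> (0 \<le> phi \<eta> \<and> phi \<eta> \<le> ereal (real (j - 1) + 1))"
    using phi_le[of \<eta> "j - 1"] \<eta> by blast
  moreover have "real (j - 1) + 1 \<le> real M"
  proof -
    have "1 \<le> j" using j by linarith
    then show ?thesis using assms(1) by (simp add: of_nat_diff)
  qed
  ultimately show ?thesis
  proof (elim disjE conjE)
    assume "ereal \<bar>t\<bar> = \<bar>phi \<eta>\<bar>" "0 \<le> phi \<eta>" "phi \<eta> \<le> ereal (real (j - 1) + 1)"
      and M: "real (j - 1) + 1 \<le> real M"
    then have "ereal \<bar>t\<bar> \<le> ereal (real (j - 1) + 1)" by simp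
    then show ?thesis using M by simp
  qed simp
qed

lemma phi_stage_replicate_True:
  "phi_stage (k + n) (prepend (replicate k True) \<eta>) = real k + phi_stage n \<eta>"
  by (induction k arbitrary: \<eta>) simp_all

lemma phi_stage_False: "phi_stage n (\<lambda>_. False) = 1 / (real n + 1)"
proof (induction n)
  case (Suc n)
  have "sdrop 1 (\<lambda>_. False) = (\<lambda>_. False)" by (simp add: sdrop_def)
  then have "phi_stage (Suc n) (\<lambda>_. False) = 1 / (1 + (real n + 1))" using Suc by simp
  then show ?case by simp
qed simp

lemma phi_replicate_True: "phi (prepend (replicate k True) (\<lambda>_. False)) = ereal (real k)"
proof -
  let ?X = "\<lambda>n. ereal (phi_stage n (prepend (replicate k True) (\<lambda>_. False)))"
  have "(\<lambda>n. 1 / (real n + 1)) = (\<lambda>n. inverse (real (Suc n)))"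
    by (rule ext) (simp add: divide_inverse add.commute)
  then have "(\<lambda>n. 1 / (real n + 1)) \<longlonglongrightarrow> 0"
    by (simp only: LIMSEQ_inverse_real_of_nat)
  then have "(\<lambda>n. real k + 1 / (real n + 1)) \<longlonglongrightarrow> real k + 0"
    by (rule tendsto_add[OF tendsto_const])
  then have "(\<lambda>n. ereal (real k + 1 / (real n + 1))) \<longlonglongrightarrow> ereal (real k)"
    by (simp only: lim_ereal add_0_right)
  moreover have "(\<lambda>n. ?X (n + k)) = (\<lambda>n. ereal (real k + 1 / (real n + 1)))"
    using phi_stage_replicate_True[of k _ "\<lambda>_. False"] by (simp only: add.commute phi_stage_False)
  ultimately have "(\<lambda>n. ?X (n + k)) \<longlonglongrightarrow> ereal (real k)" by (simp only:)
  then have "?X \<longlonglongrightarrow> ereal (real k)" by (rule LIMSEQ_offset)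
  then show ?thesis unfolding phi_def by (rule limI)
qed

lemma Phi_replicate:
  "Phi (prepend (replicate (Suc k) b) (\<lambda>_. \<not> b)) = ereal (if b then real k else - real k)"
proof -
  have "(\<lambda>n. \<not> prepend (replicate (Suc k) False) (\<lambda>_. True) (n + 1)) = prepend (replicate k True) (\<lambda>_. False)"
    by (rule ext) (simp add: prepend_def)
  then show ?thesis using phi_replicate_True[of k] by (cases b) (simp_all add: Phi_def)
qed

lemma germ_zero_fixes_constant_prefix:
  assumes "germ True g 0" "germ False g 0"
  obtains M where "\<And>\<xi>. \<forall>j<M. \<xi> j = \<xi> 0 \<Longrightarrow> g \<xi> = \<xi>"
proof -
  obtain M1 where M1: "\<forall>N\<ge>M1. \<forall>\<zeta>. g (prepend (replicate N True) \<zeta>) = prepend (replicate N True) \<zeta>"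
    using assms(1) unfolding germ_def by auto
  obtain M2 where M2: "\<forall>N\<ge>M2. \<forall>\<zeta>. g (prepend (replicate N False) \<zeta>) = prepend (replicate N False) \<zeta>"
    using assms(2) unfolding germ_def by auto
  have "g \<xi> = \<xi>" if const: "\<forall>j<M1 + M2. \<xi> j = \<xi> 0" for \<xi>
  proof -
    obtain \<eta> where \<xi>: "\<xi> = prepend (replicate (M1 + M2) (\<xi> 0)) \<eta>"
      using prepend_replicate_const[OF const] by blast
    show ?thesis
    proof (cases "\<xi> 0")
      case True
      then have "\<xi> = prepend (replicate (M1 + M2) True) \<eta>" using \<xi> by simp
      then show ?thesis using M1 by simp
    next
      case False
      then have "\<xi> = prepend (replicate (M1 + M2) False) \<eta>" using \<xi> by simp
      then show ?thesis using M2 by simp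
    qed
  qed
  then show thesis by (rule that)
qed

lemma compact_support_if_germ_zero:
  assumes "germ True g 0" "germ False g 0"
  shows "compact_support g"
proof -
  obtain M where M: "\<And>\<xi>. \<forall>j<M. \<xi> j = \<xi> 0 \<Longrightarrow> g \<xi> = \<xi>"
    using germ_zero_fixes_constant_prefix[OF assms] by blast
  define R where "R = max (real M) (real_of_ereal \<bar>lim_junk\<bar>)"
  have "Phi (g \<xi>) = Phi \<xi>" if "Phi \<xi> = ereal t" "t \<notin> cball 0 R" for \<xi> t
  proof -
    have "\<xi> j = \<xi> 0" if "j < M" for j
    proof (rule ccontr)
      assume "\<xi> j \<noteq> \<xi> 0"
      then have t: "ereal \<bar>t\<bar> = \<bar>lim_junk\<bar> \<or> \<bar>t\<bar> \<le> real M"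
        using Phi_le \<open>j < M\<close> \<open>Phi \<xi> = ereal t\<close> by blast
      have "\<bar>t\<bar> \<le> R"
      proof (cases "ereal \<bar>t\<bar> = \<bar>lim_junk\<bar>")
        case True
        then have "\<bar>t\<bar> = real_of_ereal \<bar>lim_junk\<bar>" by (metis real_of_ereal.simps(1))
        then show ?thesis by (simp add: R_def)
      qed (use t in \<open>simp add: R_def\<close>)
      then show False using \<open>t \<notin> cball 0 R\<close> by (simp add: dist_real_def)
    qed
    then have "g \<xi> = \<xi>" using M by blast
    then show ?thesis by simp
  qed
  then show ?thesis unfolding compact_support_def by (intro exI[of _ "cball 0 R"] conjI compact_cball) blast
qed

lemma germ_zero_if_compact_support:
  assumes "germ b g p" "compact_support g"
  shows "p = 0"
proof -
  obtain M where M: "\<And>N. N \<ge> M \<Longrightarrow> int N + p \<ge> 0 \<and>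
      (\<forall>\<zeta>. g (prepend (replicate N b) \<zeta>) = prepend (replicate (nat (int N + p)) b) \<zeta>)"
    using assms(1) unfolding germ_def by blast
  obtain K :: "real set" where "compact K"
    and K: "\<And>\<xi> t. Phi \<xi> = ereal t \<Longrightarrow> t \<notin> K \<Longrightarrow> Phi (g \<xi>) = Phi \<xi>"
    using assms(2) unfolding compact_support_def by blast
  obtain R where R: "\<And>x. x \<in> K \<Longrightarrow> \<bar>x\<bar> \<le> R"
    using compact_imp_bounded[OF \<open>compact K\<close>] unfolding bounded_real by blast
  define k where "k = M + nat \<bar>p\<bar> + nat \<lceil>R\<rceil> + 1"
  define k' where "k' = nat (int (Suc k) + p) - 1"
  have k': "nat (int (Suc k) + p) = Suc k'" unfolding k'_def k_def by linarith
  let ?\<xi> = "prepend (replicate (Suc k) b) (\<lambda>_. \<not> b)"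
  have "R < real k" unfolding k_def by linarith
  moreover have "\<bar>if b then real k else - real k\<bar> = real k" by simp
  ultimately have "(if b then real k else - real k) \<notin> K" using R by force
  then have "Phi (g ?\<xi>) = Phi ?\<xi>" using K Phi_replicate by blast
  moreover have k_ge: "Suc k \<ge> M" by (simp add: k_def)
  then have "g ?\<xi> = prepend (replicate (Suc k') b) (\<lambda>_. \<not> b)" using M k' by metis
  ultimately have "k' = k" using Phi_replicate[of k b] Phi_replicate[of k' b] by (cases b) simp_all
  then have "nat (int (Suc k) + p) = Suc k" using k' by simp
  then show ?thesis using M[OF k_ge] by (simp add: nat_eq_iff)
qed

lemma germ_nat_pow:
  assumes "f \<in> G0" "germ b f p"
  shows "germ b (f [^]\<^bsub>G0_group\<^esub> (n::nat)) (int n * p)"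
proof (induction n)
  case 0
  show ?case using germ_id[of b] by (simp add: one_Sym id_def)
next
  case (Suc n)
  have "f [^]\<^bsub>G0_group\<^esub> n \<in> G0"
    using monoid.nat_pow_closed[OF group.is_monoid[OF group_G0]] assms(1) by simp
  then have "f [^]\<^bsub>G0_group\<^esub> Suc n = f [^]\<^bsub>G0_group\<^esub> n \<circ> f"
    by (simp only: nat_pow_Suc mult_G0[OF _ assms(1)])
  moreover have "int (Suc n) * p = int n * p + p" by (simp add: algebra_simps)
  ultimately show ?case using germ_comp[OF Suc assms(2)] by (simp only:)
qed

lemma germ_int_pow:
  assumes "f \<in> G0" "germ b f p"
  shows "germ b (f [^]\<^bsub>G0_group\<^esub> (k::int)) (k * p)"
proof (cases "k < 0")
  case True
  have "f [^]\<^bsub>G0_group\<^esub> nat (- k) \<in> G0"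
    using monoid.nat_pow_closed[OF group.is_monoid[OF group_G0]] assms(1) by simp
  then have "f [^]\<^bsub>G0_group\<^esub> k = finv (f [^]\<^bsub>G0_group\<^esub> nat (- k))"
    using True int_pow_def2[of G0_group f k] by (simp only: if_True inv_G0)
  moreover have "germ b (finv (f [^]\<^bsub>G0_group\<^esub> nat (- k))) (- (int (nat (- k)) * p))"
    using \<open>f [^]\<^bsub>G0_group\<^esub> nat (- k) \<in> G0\<close> by (intro germ_finv germ_nat_pow assms bij_of_G0)
  moreover have "- (int (nat (- k)) * p) = k * p" using True by simp
  ultimately show ?thesis by (simp only:)
next
  case False
  then have "f [^]\<^bsub>G0_group\<^esub> k = f [^]\<^bsub>G0_group\<^esub> nat k"
    using int_pow_def2[of G0_group f k] by (simp only: if_False)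
  moreover have "int (nat k) * p = k * p" using False by simp
  ultimately show ?thesis using germ_nat_pow[OF assms, of "nat k"] by (simp only:)
qed

definition x_powers :: "int \<Rightarrow> int \<Rightarrow> seq \<Rightarrow> seq" where
  "x_powers i j = xmap [^]\<^bsub>G0_group\<^esub> i \<circ> x_s [True] [^]\<^bsub>G0_group\<^esub> j"

lemma int_pow_in_G0: "f \<in> G0 \<Longrightarrow> f [^]\<^bsub>G0_group\<^esub> (k::int) \<in> G0"
  using group.int_pow_closed[OF group_G0] by simp

lemma x_powers_in_G0: "x_powers i j \<in> G0"
  unfolding x_powers_def by (intro comp_in_G0 int_pow_in_G0 xmap_in_G0 x_s_in_G0)

lemma ab_x_powers: "ab (x_powers i j) = ab_monomial i j 0"
proof -
  interpret Ab: comm_group Ab by (rule comm_group_Ab)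
  have "ab (x_powers i j) = ab xmap [^]\<^bsub>Ab\<^esub> i \<otimes>\<^bsub>Ab\<^esub> ab (x_s [True]) [^]\<^bsub>Ab\<^esub> j"
    unfolding x_powers_def
    by (simp add: ab_comp int_pow_in_G0 xmap_in_G0 group_hom.hom_int_pow[OF group_hom_ab])
  then show ?thesis using ab_generators_in_carrier by (simp add: ab_monomial_def)
qed

lemma x_powers_eq_id_if_germ_zero:
  assumes "germ True (x_powers i j) 0" "germ False (x_powers i j) 0"
  shows "x_powers i j = id"
proof -
  have "germ True (x_powers i j) (i * 1 + j * 1)"
    unfolding x_powers_def
    by (intro germ_comp germ_int_pow xmap_in_G0 x_s_in_G0 germ_xmap_True germ_x_s_True)
  then have "i + j = 0" using germ_unique[OF _ assms(1)] by simp
  moreover have "germ False (x_powers i j) (i * (-1) + j * 0)"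
    unfolding x_powers_def
    by (intro germ_comp germ_int_pow xmap_in_G0 x_s_in_G0 germ_xmap_False germ_x_s_False)
  then have "i * (-1) + j * 0 = 0" by (rule germ_unique[OF _ assms(2)])
  ultimately show ?thesis by (simp add: x_powers_def one_Sym)
qed

lemma germ_zero_if_compact_support_in_G0: "g \<in> G0 \<Longrightarrow> compact_support g \<Longrightarrow> germ b g 0"
  using G0_has_germ germ_zero_if_compact_support by blast

text \<open>g differs from the product of powers of x and x_1 with the same class by an element of the
commutator subgroup; both have trivial germs, so the product is trivial.\<close>
lemma derived_if_compact_support_and_ab:
  assumes "g \<in> G0" "compact_support g" "ab g = ab_monomial i j 0"
  shows "g \<in> G0'"
proof -
  let ?h = "x_powers i j"
  have k: "g \<circ> finv ?h \<in> G0'"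
    using assms by (intro comp_finv_in_derived_if_ab_eq x_powers_in_G0) (simp_all add: ab_x_powers)
  have "?h = finv (g \<circ> finv ?h) \<circ> g"
    using bij_of_G0[OF assms(1)] bij_of_G0[OF x_powers_in_G0]
    by (simp add: o_inv_distrib bij_finv inv_inv_eq comp_assoc bij_finv_comp)
  moreover have "germ b (finv (g \<circ> finv ?h) \<circ> g) (- 0 + 0)" for b
    using k assms(1,2) derived_G0_subset_G0
    by (intro germ_comp germ_finv derived_G0_germ_zero germ_zero_if_compact_support_in_G0 bij_of_G0) auto
  ultimately have "?h = id" using x_powers_eq_id_if_germ_zero by simp
  then show ?thesis using k by simp
qed

theorem mainTheorem4:
  shows "G0' = {g \<in> G0. compact_support g \<and>
                 (\<exists>w. valid_word w \<and> word_eval w = g \<and> y_exponent w = 0)}"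
proof (intro equalityI subsetI CollectI conjI)
  fix g assume g: "g \<in> G0'"
  then show "g \<in> G0" using derived_G0_subset_G0 by blast
  show "compact_support g" using g by (intro compact_support_if_germ_zero derived_G0_germ_zero)
  show "\<exists>w. valid_word w \<and> word_eval w = g \<and> y_exponent w = 0"
    using g derived_G0_subset_y_exponent_zero by (blast elim: word_evalsE)
next
  fix g assume "g \<in> {g \<in> G0. compact_support g \<and> (\<exists>w. valid_word w \<and> word_eval w = g \<and> y_exponent w = 0)}"
  then obtain w where g: "g \<in> G0" "compact_support g" and w: "valid_word w" "word_eval w = g" "y_exponent w = 0"
    by blast
  obtain i j where "ab g = ab_monomial i j 0" using ab_word_eval[OF w(1)] w(2,3) by auto
  then show "g \<in> G0'" using derived_if_compact_support_and_ab g by blast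
qed

end
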